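(* Let $(H,L_H)$ be a right-resolving labeled graph presenting $Y=L_H(X_H)$, and let $x\in X_H$. Then $L_H : \mathbb U(x) \to \mathbb U(L_H(x))$ is surjective if and only if $$\{ L_H(\mu) : \mu \in X_H[0,\infty),\ s_H(\mu) = t_H(x_{(-\infty, k]})\} = \{ y \in Y[0,\infty): L_H(x_{(-\infty,k]})y \in Y \}$$ holds for all $k \in \mathbb Z$.
   Context: A labeled graph $(H,L_H)$: finite directed graph (vertices $V_H$, edges $E_H$, source/terminal maps $s_H,t_H$) without sinks or sources, labeling $L_H:E_H\to A$, edge shift $X_H$; $L_H$ acts coordinatewise on paths. $X_H[0,\infty)$ denotes right-infinite paths $e_0e_1\cdots$ and $s_H$ of such a path is the source of its first edge; $x_{(-\infty,k]}=\cdots x_{k-1}x_k$ and $t_H$ of it is the terminal vertex of $x_k$; $Y[0,\infty)=\{y_{[0,\infty)}:y\in Y\}$. Right-resolving: distinct edges with the same source have distinct labels. For a subshift $X$ and $x\in X$, $\mathbb U(x)=\{z\in X:\exists N\in\mathbb Z\ \forall i\le N,\ z_i=x_i\}$. *)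

theory Defs
  imports Main
begin

definition essential_graph :: "'v set \<Rightarrow> 'e set \<Rightarrow> ('e \<Rightarrow> 'v) \<Rightarrow> ('e \<Rightarrow> 'v) \<Rightarrow> bool" where
  "essential_graph V E s t \<longleftrightarrow> finite V \<and> finite E \<and> s ` E \<subseteq> V \<and> t ` E \<subseteq> V \<and>
     (\<forall>v\<in>V. \<exists>e\<in>E. s e = v) \<and> (\<forall>v\<in>V. \<exists>e\<in>E. t e = v)"

definition edge_shift :: "'e set \<Rightarrow> ('e \<Rightarrow> 'v) \<Rightarrow> ('e \<Rightarrow> 'v) \<Rightarrow> (int \<Rightarrow> 'e) set" where
  "edge_shift E s t = {x. (\<forall>i. x i \<in> E) \<and> (\<forall>i. t (x i) = s (x (i + 1)))}"

definition right_paths :: "'e set \<Rightarrow> ('e \<Rightarrow> 'v) \<Rightarrow> ('e \<Rightarrow> 'v) \<Rightarrow> (nat \<Rightarrow> 'e) set" where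
  "right_paths E s t = {\<mu>. (\<forall>n. \<mu> n \<in> E) \<and> (\<forall>n. t (\<mu> n) = s (\<mu> (Suc n)))}"

definition right_resolving :: "'e set \<Rightarrow> ('e \<Rightarrow> 'v) \<Rightarrow> ('e \<Rightarrow> 'a) \<Rightarrow> bool" where
  "right_resolving E s L \<longleftrightarrow> (\<forall>e\<in>E. \<forall>f\<in>E. e \<noteq> f \<and> s e = s f \<longrightarrow> L e \<noteq> L f)"

definition unstable_set :: "(int \<Rightarrow> 'b) set \<Rightarrow> (int \<Rightarrow> 'b) \<Rightarrow> (int \<Rightarrow> 'b) set" where
  "unstable_set X x = {z \<in> X. \<exists>N. \<forall>i\<le>N. z i = x i}"

definition right_half :: "(int \<Rightarrow> 'b) set \<Rightarrow> (nat \<Rightarrow> 'b) set" where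
  "right_half Y = {(\<lambda>n. y (int n)) | y. y \<in> Y}"

text \<open>Concatenation w_(-\<infinity>,k] y of a left-infinite word (the part of w at indices \<le> k)
  with a right-infinite word y, placed so that y_0 sits at index k+1.\<close>
definition concat_at :: "int \<Rightarrow> (int \<Rightarrow> 'b) \<Rightarrow> (nat \<Rightarrow> 'b) \<Rightarrow> (int \<Rightarrow> 'b)" where
  "concat_at k w y = (\<lambda>i. if i \<le> k then w i else y (nat (i - k - 1)))"

end

theory Submission
  imports Defs
begin

text \<open>Right-resolvingness lets a path be lifted uniquely along its labels once one edge
  is fixed. So a point of \<open>U(x)\<close> whose label agrees with \<open>L x\<close> up to \<open>k\<close>
  must itself agree with \<open>x\<close> up to \<open>k\<close>; its tail is then a path leaving
  \<open>t(x\<^sub>k)\<close>. Conversely a point of \<open>U(L x)\<close> agreeing with \<open>L x\<close> up to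
  \<open>N\<close> lifts to \<open>U(x)\<close> as soon as its tail after \<open>N\<close> is the label of a path
  leaving \<open>t(x\<^sub>N)\<close>.\<close>

definition follower_labels ::
    "'e set \<Rightarrow> ('e \<Rightarrow> 'v) \<Rightarrow> ('e \<Rightarrow> 'v) \<Rightarrow> ('e \<Rightarrow> 'a) \<Rightarrow> 'v \<Rightarrow> (nat \<Rightarrow> 'a) set" where
  "follower_labels E s t L v = {L \<circ> \<mu> | \<mu>. \<mu> \<in> right_paths E s t \<and> s (\<mu> 0) = v}"

definition right_extensions :: "(int \<Rightarrow> 'b) set \<Rightarrow> int \<Rightarrow> (int \<Rightarrow> 'b) \<Rightarrow> (nat \<Rightarrow> 'b) set" where
  "right_extensions Y k w = {y \<in> right_half Y. concat_at k w y \<in> Y}"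

lemma concat_at_le [simp]: "i \<le> k \<Longrightarrow> concat_at k w y i = w i"
  by (simp add: concat_at_def)

lemma concat_at_tail [simp]: "concat_at k w y (k + 1 + int n) = y n"
  by (simp add: concat_at_def)

lemma concat_at_comp: "f \<circ> concat_at k w y = concat_at k (f \<circ> w) (f \<circ> y)"
  by (auto simp: concat_at_def)

lemma concat_at_in_edge_shift:
  assumes x: "x \<in> edge_shift E s t" and \<mu>: "\<mu> \<in> right_paths E s t"
    and joined: "s (\<mu> 0) = t (x k)"
  shows "concat_at k x \<mu> \<in> edge_shift E s t"
proof -
  have "t (concat_at k x \<mu> i) = s (concat_at k x \<mu> (i + 1))" for i
  proof -
    consider "i < k" | "i = k" | "k < i" by linarith
    then show ?thesis
    proof cases
      case 3
      then have "nat (i + 1 - k - 1) = Suc (nat (i - k - 1))" by simp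
      with 3 \<mu> show ?thesis unfolding concat_at_def right_paths_def by auto
    qed (use x joined in \<open>auto simp: concat_at_def edge_shift_def\<close>)
  qed
  moreover have "concat_at k x \<mu> i \<in> E" for i
    using x \<mu> unfolding edge_shift_def right_paths_def concat_at_def by auto
  ultimately show ?thesis unfolding edge_shift_def by blast
qed

lemma tail_in_right_paths:
  "z \<in> edge_shift E s t \<Longrightarrow> (\<lambda>n. z (k + 1 + int n)) \<in> right_paths E s t"
  unfolding edge_shift_def right_paths_def by (auto simp: algebra_simps)

lemma tail_in_right_half_label_image:
  assumes "w \<in> (\<lambda>z. L \<circ> z) ` edge_shift E s t"
  shows "(\<lambda>n. w (k + 1 + int n)) \<in> right_half ((\<lambda>z. L \<circ> z) ` edge_shift E s t)"
proof -
  from assms obtain z where z: "z \<in> edge_shift E s t" and w: "w = L \<circ> z" by blast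
  let ?z' = "\<lambda>i. z (i + (k + 1))"
  have "?z' \<in> edge_shift E s t"
    using z unfolding edge_shift_def by (simp add: algebra_simps)
  moreover have "(\<lambda>n. w (k + 1 + int n)) = (\<lambda>n. (L \<circ> ?z') (int n))"
    using w by (simp add: add.commute)
  ultimately show ?thesis unfolding right_half_def by blast
qed

lemma right_resolving_next_edge_eq:
  assumes "right_resolving E s L" "x \<in> edge_shift E s t" "z \<in> edge_shift E s t"
    and "z i = x i" "L (z (i + 1)) = L (x (i + 1))"
  shows "z (i + 1) = x (i + 1)"
proof -
  have "s (z (i + 1)) = t (z i)" "s (x (i + 1)) = t (x i)"
    using assms(2,3) unfolding edge_shift_def by auto
  then have "s (z (i + 1)) = s (x (i + 1))"
    using assms(4) by simp
  moreover have "z (i + 1) \<in> E" "x (i + 1) \<in> E"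
    using assms(2,3) unfolding edge_shift_def by auto
  ultimately show ?thesis using assms(1,5) unfolding right_resolving_def by blast
qed

lemma right_resolving_agree_upto:
  assumes rr: "right_resolving E s L" and x: "x \<in> edge_shift E s t" and z: "z \<in> edge_shift E s t"
    and agree: "\<forall>i\<le>N. z i = x i" and labels: "\<forall>i\<le>k. L (z i) = L (x i)" and "i \<le> k"
  shows "z i = x i"
proof (cases "i \<le> N")
  case False
  then have "N \<le> i" by simp
  then show ?thesis using \<open>i \<le> k\<close>
  proof (induction i rule: int_ge_induct)
    case (step i)
    then show ?case using right_resolving_next_edge_eq[OF rr x z] labels by simp
  qed (use agree in simp)
qed (use agree in simp)

lemma label_image_unstable_subset:
  "(\<lambda>z. f \<circ> z) ` unstable_set X x \<subseteq> unstable_set ((\<lambda>z. f \<circ> z) ` X) (f \<circ> x)"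
  unfolding unstable_set_def by fastforce

lemma follower_labels_subset_right_extensions:
  assumes "x \<in> edge_shift E s t"
  shows "follower_labels E s t L (t (x k))
           \<subseteq> right_extensions ((\<lambda>z. L \<circ> z) ` edge_shift E s t) k (L \<circ> x)"
proof
  fix y assume "y \<in> follower_labels E s t L (t (x k))"
  then obtain \<mu> where \<mu>: "\<mu> \<in> right_paths E s t" "s (\<mu> 0) = t (x k)" and y: "y = L \<circ> \<mu>"
    unfolding follower_labels_def by blast
  let ?w = "L \<circ> concat_at k x \<mu>"
  have w: "?w \<in> (\<lambda>z. L \<circ> z) ` edge_shift E s t"
    using concat_at_in_edge_shift[OF assms \<mu>] by blast
  have "y = (\<lambda>n. ?w (k + 1 + int n))"
    using y by auto
  with tail_in_right_half_label_image[OF w, where k = k]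
  have "y \<in> right_half ((\<lambda>z. L \<circ> z) ` edge_shift E s t)"
    by simp
  with w show "y \<in> right_extensions ((\<lambda>z. L \<circ> z) ` edge_shift E s t) k (L \<circ> x)"
    unfolding right_extensions_def by (simp add: concat_at_comp y)
qed

lemma right_extensions_subset_follower_labels:
  assumes rr: "right_resolving E s L" and x: "x \<in> edge_shift E s t"
    and surj: "unstable_set ((\<lambda>z. L \<circ> z) ` edge_shift E s t) (L \<circ> x)
                 \<subseteq> (\<lambda>z. L \<circ> z) ` unstable_set (edge_shift E s t) x"
  shows "right_extensions ((\<lambda>z. L \<circ> z) ` edge_shift E s t) k (L \<circ> x)
           \<subseteq> follower_labels E s t L (t (x k))"
proof
  fix y assume "y \<in> right_extensions ((\<lambda>z. L \<circ> z) ` edge_shift E s t) k (L \<circ> x)"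
  moreover have "\<forall>i\<le>k. concat_at k (L \<circ> x) y i = (L \<circ> x) i"
    by simp
  ultimately have "concat_at k (L \<circ> x) y \<in> unstable_set ((\<lambda>z. L \<circ> z) ` edge_shift E s t) (L \<circ> x)"
    unfolding right_extensions_def unstable_set_def by blast
  with surj obtain z N where z: "z \<in> edge_shift E s t" and agree: "\<forall>i\<le>N. z i = x i"
    and lift: "concat_at k (L \<circ> x) y = L \<circ> z"
    unfolding unstable_set_def by blast
  have "L (z i) = L (x i)" if "i \<le> k" for i
    using fun_cong[OF lift, of i] that by simp
  then have "z k = x k"
    using right_resolving_agree_upto[OF rr x z agree] by blast
  let ?\<mu> = "\<lambda>n. z (k + 1 + int n)"
  have "s (?\<mu> 0) = t (z k)"
    using z unfolding edge_shift_def by simp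
  with \<open>z k = x k\<close> have "s (?\<mu> 0) = t (x k)"
    by simp
  moreover have "y = L \<circ> ?\<mu>"
  proof
    fix n
    show "y n = (L \<circ> ?\<mu>) n"
      using fun_cong[OF lift, of "k + 1 + int n"] by simp
  qed
  ultimately show "y \<in> follower_labels E s t L (t (x k))"
    unfolding follower_labels_def using tail_in_right_paths[OF z] by blast
qed

lemma unstable_subset_label_image:
  assumes x: "x \<in> edge_shift E s t"
    and ext: "\<forall>k. right_extensions ((\<lambda>z. L \<circ> z) ` edge_shift E s t) k (L \<circ> x)
                  \<subseteq> follower_labels E s t L (t (x k))"
  shows "unstable_set ((\<lambda>z. L \<circ> z) ` edge_shift E s t) (L \<circ> x)
           \<subseteq> (\<lambda>z. L \<circ> z) ` unstable_set (edge_shift E s t) x"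
proof
  fix w assume "w \<in> unstable_set ((\<lambda>z. L \<circ> z) ` edge_shift E s t) (L \<circ> x)"
  then obtain N where w: "w \<in> (\<lambda>z. L \<circ> z) ` edge_shift E s t" and agree: "\<forall>i\<le>N. w i = L (x i)"
    unfolding unstable_set_def by auto
  let ?y = "\<lambda>n. w (N + 1 + int n)"
  have w_concat: "concat_at N (L \<circ> x) ?y = w"
    using agree by (auto simp: concat_at_def)
  have "?y \<in> right_extensions ((\<lambda>z. L \<circ> z) ` edge_shift E s t) N (L \<circ> x)"
    unfolding right_extensions_def using tail_in_right_half_label_image[OF w] w w_concat by simp
  with ext obtain \<mu> where \<mu>: "\<mu> \<in> right_paths E s t" "s (\<mu> 0) = t (x N)" and y: "?y = L \<circ> \<mu>"
    unfolding follower_labels_def by blast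
  have "concat_at N x \<mu> \<in> unstable_set (edge_shift E s t) x"
    using concat_at_in_edge_shift[OF x \<mu>] concat_at_le[of _ N x \<mu>]
    unfolding unstable_set_def by blast
  moreover have "w = L \<circ> concat_at N x \<mu>"
    using w_concat y by (simp add: concat_at_comp)
  ultimately show "w \<in> (\<lambda>z. L \<circ> z) ` unstable_set (edge_shift E s t) x"
    by blast
qed

theorem lemma2p5:
  fixes V :: "'v set" and E :: "'e set" and s t :: "'e \<Rightarrow> 'v" and L :: "'e \<Rightarrow> 'a"
    and x :: "int \<Rightarrow> 'e"
  assumes "essential_graph V E s t"
    and "right_resolving E s L"
    and "x \<in> edge_shift E s t"
  shows "((\<lambda>z. L \<circ> z) ` unstable_set (edge_shift E s t) x
            = unstable_set ((\<lambda>z. L \<circ> z) ` edge_shift E s t) (L \<circ> x))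
         \<longleftrightarrow>
         (\<forall>k::int.
            {L \<circ> \<mu> | \<mu>. \<mu> \<in> right_paths E s t \<and> s (\<mu> 0) = t (x k)}
            = {y \<in> right_half ((\<lambda>z. L \<circ> z) ` edge_shift E s t).
                 concat_at k (L \<circ> x) y \<in> (\<lambda>z. L \<circ> z) ` edge_shift E s t})"
proof -
  let ?X = "edge_shift E s t"
  let ?Y = "(\<lambda>z. L \<circ> z) ` ?X"
  have "(\<lambda>z. L \<circ> z) ` unstable_set ?X x = unstable_set ?Y (L \<circ> x)
        \<longleftrightarrow> (\<forall>k. follower_labels E s t L (t (x k)) = right_extensions ?Y k (L \<circ> x))"
  proof
    assume "(\<lambda>z. L \<circ> z) ` unstable_set ?X x = unstable_set ?Y (L \<circ> x)"
    then have "right_extensions ?Y k (L \<circ> x) \<subseteq> follower_labels E s t L (t (x k))" for k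
      using right_extensions_subset_follower_labels[OF assms(2,3)] by simp
    then show "\<forall>k. follower_labels E s t L (t (x k)) = right_extensions ?Y k (L \<circ> x)"
      using follower_labels_subset_right_extensions[OF assms(3)] by (blast intro: equalityI)
  next
    assume "\<forall>k. follower_labels E s t L (t (x k)) = right_extensions ?Y k (L \<circ> x)"
    then have "\<forall>k. right_extensions ?Y k (L \<circ> x) \<subseteq> follower_labels E s t L (t (x k))"
      by simp
    then have "unstable_set ?Y (L \<circ> x) \<subseteq> (\<lambda>z. L \<circ> z) ` unstable_set ?X x"
      by (rule unstable_subset_label_image[OF assms(3)])
    with label_image_unstable_subset
    show "(\<lambda>z. L \<circ> z) ` unstable_set ?X x = unstable_set ?Y (L \<circ> x)"
      by (rule equalityI)
  qed
  then show ?thesis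
    unfolding follower_labels_def right_extensions_def .
qed

end
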